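(* Let $t\in\{1,\dots,T\}$, and suppose that every component of the vector $\sum_{i=0}^{t-1}\Delta_i^{t}\in\mathbb{R}^p$ is nonzero. Then \[ \frac{\left\|\theta_{t}^{BP}-\theta_{t}^{\lambda}\right\|_2}{\left\|\theta_{t}^{BP}-\theta_{0}\right\|_2}\;\longrightarrow\;0 \qquad\text{as } \alpha\to 0^+ . \]
   Context: Fix integers $d,p\ge 1$ and a horizon $T\ge 1$. A recurrent network with a differentiable transition map $f$ and fixed inputs $x_1,\dots,x_T$ produces hidden states $h_0,h_1,\dots,h_T\in\mathbb{R}^d$ via $h_t=f(x_t,h_{t-1})$ (network parameters are held fixed). For $1\le t\le T$ there is a loss $L_t=\ell_t(h_t)$ with $\ell_t$ differentiable. For $0\le s\le\tau\le T$, $\partial h_\tau/\partial h_s\in\mathbb{R}^{d\times d}$ denotes the Jacobian of $h_\tau$ viewed as a function of $h_s$ through the recursion (the identity if $\tau=s$), and for $s<\tau$, $\partial L_\tau/\partial h_s\in\mathbb{R}^d$ is the gradient of $L_\tau$ viewed as a function of $h_s$. For $v\in\mathbb{R}^d$, the notation $v^\top \partial h_\tau/\partial h_s$ denotes the vector $(\partial h_\tau/\partial h_s)^\top v\in\mathbb{R}^d$. A "synthesiser" is a map $g:\mathbb{R}^d\times\mathbb{R}^p\to\mathbb{R}^d$, $(h,\theta)\mapsto g(h;\theta)$, continuously differentiable in $\theta$, with $\nabla_\theta g(h;\theta)\in\mathbb{R}^{d\times p}$ its Jacobian with respect to $\theta$. Fix $\gamma,\lambda\in[0,1]$, an initial weight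 vector $\theta_0\in\mathbb{R}^p$, and a learning rate $\alpha>0$; all quantities below except the data depend on $\alpha$. Conventions: $0^0=1$. $n$-step and interim $\lambda$-weighted synthetic gradients relative to a sequence of weight vectors $(\vartheta_i)$: for $k\ge 0$, $n\ge1$, $k+n\le T$, $G_k^{(n)}=\sum_{\tau=1}^{n}\gamma^{\tau-1}\frac{\partial L_{k+\tau}}{\partial h_k}+\gamma^{n}\,g(h_{k+n};\vartheta_{k+n-1})^\top\frac{\partial h_{k+n}}{\partial h_k}$, and for $0\le k<H\le T$, $G_k^{\lambda\mid H}=(1-\lambda)\sum_{n=1}^{H-k-1}\lambda^{n-1}G_k^{(n)}+\lambda^{H-k-1}G_k^{(H-k)}$. Accumulate $\mathrm{BP}(\lambda)$: set $e_{-1}=0\in\mathbb{R}^{d\times p}$ and, starting from $\theta_0$, for $t=0,1,\dots,T-1$: $e_t=\gamma\lambda\,\frac{\partial h_t}{\partial h_{t-1}}e_{t-1}+\nabla_\theta g(h_t;\theta_t)$ (the first term is zero for $t=0$), $\delta_t=\frac{\partial L_{t+1}}{\partial h_t}+\gamma\, g(h_{t+1};\theta_t)^\top\frac{\partial h_{t+1}}{\partial h_t}-g(h_t;\theta_t)\in\mathbb{R}^d$, and $\theta_{t+1}=\theta_t+\alpha\, e_t^\top\delta_t$. Write $\theta_t^{BP}$ for the vector $\theta_t$ so produced. Online $\lambda$-SG algorithm: for each horizon $t\in\{1,\dots,T\}$ set $\theta_0^t=\theta_0$ and for $k=0,\dots,t-1$, $\theta_{k+1}^t=\theta_k^t+\alpha\,\nabla_\theta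 g(h_k;\theta_k^t)^\top\big(G_k^{\lambda\mid t}-g(h_k;\theta_k^t)\big)$, where $G_k^{\lambda\mid t}$ is computed relative to the sequence $\vartheta_i=\theta_i^i$ (with $\theta_0^0=\theta_0$). Write $\theta_t^{\lambda}:=\theta_t^t$. Finally, $\bar G_i^{\lambda\mid t}$ denotes the interim $\lambda$-weighted synthetic gradient computed relative to the constant sequence $\vartheta_j=\theta_0$, and $\Delta_i^t:=\nabla_\theta g(h_i;\theta_0)^\top\big(\bar G_i^{\lambda\mid t}-g(h_i;\theta_0)\big)\in\mathbb{R}^p$. *)

theory Defs
  imports "HOL-Analysis.Analysis"
begin

definition grad :: "(real^'d \<Rightarrow> real) \<Rightarrow> real^'d \<Rightarrow> real^'d" where
  "grad F z = (\<chi> i. frechet_derivative F (at z) (axis i 1))"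

(* flow f x s \<tau>: the map h_s \<mapsto> h_\<tau> through the recursion h_t = f(x_t, h_{t-1});
   identity for \<tau> \<le> s. *)
primrec flow :: "('x \<Rightarrow> real^'d \<Rightarrow> real^'d) \<Rightarrow> (nat \<Rightarrow> 'x) \<Rightarrow> nat \<Rightarrow> nat \<Rightarrow> real^'d \<Rightarrow> real^'d" where
  "flow f x s 0 = id"
| "flow f x s (Suc \<tau>) = (if Suc \<tau> \<le> s then id else f (x (Suc \<tau>)) \<circ> flow f x s \<tau>)"

definition hid :: "('x \<Rightarrow> real^'d \<Rightarrow> real^'d) \<Rightarrow> (nat \<Rightarrow> 'x) \<Rightarrow> real^'d \<Rightarrow> nat \<Rightarrow> real^'d" where
  "hid f x h0 t = flow f x 0 t h0"

definition dh :: "('x \<Rightarrow> real^'d \<Rightarrow> real^'d) \<Rightarrow> (nat \<Rightarrow> 'x) \<Rightarrow> real^'d \<Rightarrow> nat \<Rightarrow> nat \<Rightarrow> real^'d^'d" where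
  "dh f x h0 \<tau> s = jacobian (flow f x s \<tau>) (at (hid f x h0 s))"

definition dL :: "('x \<Rightarrow> real^'d \<Rightarrow> real^'d) \<Rightarrow> (nat \<Rightarrow> 'x) \<Rightarrow> real^'d \<Rightarrow> (nat \<Rightarrow> real^'d \<Rightarrow> real)
                  \<Rightarrow> nat \<Rightarrow> nat \<Rightarrow> real^'d" where
  "dL f x h0 ell \<tau> s = grad (ell \<tau> \<circ> flow f x s \<tau>) (hid f x h0 s)"

definition dg :: "(real^'d \<Rightarrow> real^'p \<Rightarrow> real^'d) \<Rightarrow> real^'d \<Rightarrow> real^'p \<Rightarrow> real^'p^'d" where
  "dg g h \<theta> = jacobian (g h) (at \<theta>)"

definition Gn :: "('x \<Rightarrow> real^'d \<Rightarrow> real^'d) \<Rightarrow> (nat \<Rightarrow> 'x) \<Rightarrow> real^'d \<Rightarrow> (nat \<Rightarrow> real^'d \<Rightarrow> real)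
                  \<Rightarrow> (real^'d \<Rightarrow> real^'p \<Rightarrow> real^'d) \<Rightarrow> real \<Rightarrow> (nat \<Rightarrow> real^'p) \<Rightarrow> nat \<Rightarrow> nat \<Rightarrow> real^'d" where
  "Gn f x h0 ell g \<gamma> vth k n =
     (\<Sum>\<tau>=1..n. \<gamma> ^ (\<tau> - 1) *\<^sub>R dL f x h0 ell (k + \<tau>) k)
     + \<gamma> ^ n *\<^sub>R (transpose (dh f x h0 (k + n) k) *v g (hid f x h0 (k + n)) (vth (k + n - 1)))"

definition Glam :: "('x \<Rightarrow> real^'d \<Rightarrow> real^'d) \<Rightarrow> (nat \<Rightarrow> 'x) \<Rightarrow> real^'d \<Rightarrow> (nat \<Rightarrow> real^'d \<Rightarrow> real)
                  \<Rightarrow> (real^'d \<Rightarrow> real^'p \<Rightarrow> real^'d) \<Rightarrow> real \<Rightarrow> real \<Rightarrow> (nat \<Rightarrow> real^'p) \<Rightarrow> nat \<Rightarrow> nat \<Rightarrow> real^'d" where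
  "Glam f x h0 ell g \<gamma> lam vth k H =
     (1 - lam) *\<^sub>R (\<Sum>n=1..H - k - 1. lam ^ (n - 1) *\<^sub>R Gn f x h0 ell g \<gamma> vth k n)
     + lam ^ (H - k - 1) *\<^sub>R Gn f x h0 ell g \<gamma> vth k (H - k)"

(* Accumulate BP(\<lambda>): bpstate t = (e_{t-1}, \<theta>_t) *)
primrec bpstate :: "('x \<Rightarrow> real^'d \<Rightarrow> real^'d) \<Rightarrow> (nat \<Rightarrow> 'x) \<Rightarrow> real^'d \<Rightarrow> (nat \<Rightarrow> real^'d \<Rightarrow> real)
                  \<Rightarrow> (real^'d \<Rightarrow> real^'p \<Rightarrow> real^'d) \<Rightarrow> real \<Rightarrow> real \<Rightarrow> real \<Rightarrow> real^'p \<Rightarrow> nat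
                  \<Rightarrow> (real^'p^'d) \<times> (real^'p)" where
  "bpstate f x h0 ell g \<gamma> lam \<alpha> \<theta>0 0 = (0, \<theta>0)"
| "bpstate f x h0 ell g \<gamma> lam \<alpha> \<theta>0 (Suc t) =
     (let e_prev = fst (bpstate f x h0 ell g \<gamma> lam \<alpha> \<theta>0 t);
          \<theta> = snd (bpstate f x h0 ell g \<gamma> lam \<alpha> \<theta>0 t);
          e = (if t = 0 then dg g (hid f x h0 t) \<theta>
               else (\<gamma> * lam) *\<^sub>R (dh f x h0 t (t - 1) ** e_prev) + dg g (hid f x h0 t) \<theta>);
          \<delta> = dL f x h0 ell (t + 1) t
              + \<gamma> *\<^sub>R (transpose (dh f x h0 (t + 1) t) *v g (hid f x h0 (t + 1)) \<theta>)
              - g (hid f x h0 t) \<theta>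
      in (e, \<theta> + \<alpha> *\<^sub>R (transpose e *v \<delta>)))"

definition thetaBP where
  "thetaBP f x h0 ell g \<gamma> lam \<alpha> \<theta>0 t = snd (bpstate f x h0 ell g \<gamma> lam \<alpha> \<theta>0 t)"

(* Online \<lambda>-SG, inner loop for horizon t, relative to the weight sequence vth:
   sginner ... t vth k = \<theta>_k^t *)
primrec sginner :: "('x \<Rightarrow> real^'d \<Rightarrow> real^'d) \<Rightarrow> (nat \<Rightarrow> 'x) \<Rightarrow> real^'d \<Rightarrow> (nat \<Rightarrow> real^'d \<Rightarrow> real)
                  \<Rightarrow> (real^'d \<Rightarrow> real^'p \<Rightarrow> real^'d) \<Rightarrow> real \<Rightarrow> real \<Rightarrow> real \<Rightarrow> real^'p
                  \<Rightarrow> nat \<Rightarrow> (nat \<Rightarrow> real^'p) \<Rightarrow> nat \<Rightarrow> real^'p" where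
  "sginner f x h0 ell g \<gamma> lam \<alpha> \<theta>0 t vth 0 = \<theta>0"
| "sginner f x h0 ell g \<gamma> lam \<alpha> \<theta>0 t vth (Suc k) =
     (let \<theta> = sginner f x h0 ell g \<gamma> lam \<alpha> \<theta>0 t vth k
      in \<theta> + \<alpha> *\<^sub>R (transpose (dg g (hid f x h0 k) \<theta>)
                      *v (Glam f x h0 ell g \<gamma> lam vth k t - g (hid f x h0 k) \<theta>)))"

(* sgseq ... n i = \<theta>_i^i for i \<le> n (the horizon-t run only uses indices \<le> t-1);
   entries above n are unused placeholders. *)
primrec sgseq :: "('x \<Rightarrow> real^'d \<Rightarrow> real^'d) \<Rightarrow> (nat \<Rightarrow> 'x) \<Rightarrow> real^'d \<Rightarrow> (nat \<Rightarrow> real^'d \<Rightarrow> real)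
                  \<Rightarrow> (real^'d \<Rightarrow> real^'p \<Rightarrow> real^'d) \<Rightarrow> real \<Rightarrow> real \<Rightarrow> real \<Rightarrow> real^'p
                  \<Rightarrow> nat \<Rightarrow> nat \<Rightarrow> real^'p" where
  "sgseq f x h0 ell g \<gamma> lam \<alpha> \<theta>0 0 = (\<lambda>i. \<theta>0)"
| "sgseq f x h0 ell g \<gamma> lam \<alpha> \<theta>0 (Suc n) =
     (let vth = sgseq f x h0 ell g \<gamma> lam \<alpha> \<theta>0 n
      in vth(Suc n := sginner f x h0 ell g \<gamma> lam \<alpha> \<theta>0 (Suc n) vth (Suc n)))"

definition thetaLam where
  "thetaLam f x h0 ell g \<gamma> lam \<alpha> \<theta>0 t = sgseq f x h0 ell g \<gamma> lam \<alpha> \<theta>0 t t"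

definition Delta where
  "Delta f x h0 ell g \<gamma> lam \<theta>0 i t =
     transpose (dg g (hid f x h0 i) \<theta>0)
       *v (Glam f x h0 ell g \<gamma> lam (\<lambda>j. \<theta>0) i t - g (hid f x h0 i) \<theta>0)"

end

theory Submission
  imports Defs
begin

(* Both runs move the weights from theta_0 by alpha times a direction: for BP(lambda) it is
   sum_k delta_k^T e_k, for online lambda-SG the sum of its increments. All weights involved
   stay within O(alpha) of theta_0, so as alpha -> 0 both directions tend to their values at the
   constant weights theta_0. There the online increments are exactly the Delta_i^t, and the
   backward view of BP(lambda) equals the forward view: unrolling the trace
   e_k = sum_{i<=k} (gamma lambda)^(k-i) (dh_k/dh_i) grad_theta g(h_i), exchanging the double sum
   and pulling each TD error delta_k back to h_i by the chain rule gives
   sum_i grad_theta g(h_i)^T sum_m (gamma lambda)^m delta_{i+m}, while the lambda-return telescopes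
   to the same discounted sum of TD errors. So both directions converge to the nonzero vector
   sum_i Delta_i^t, and the relative distance tends to 0. *)

lemma jacobian_compose:
  fixes A :: "real^'m \<Rightarrow> real^'n" and B :: "real^'k \<Rightarrow> real^'m"
  assumes "A differentiable (at (B z))" "B differentiable (at z)"
  shows "jacobian (A \<circ> B) (at z) = jacobian A (at (B z)) ** jacobian B (at z)"
proof -
  have "linear (frechet_derivative A (at (B z)))" "linear (frechet_derivative B (at z))"
    using assms frechet_derivative_works has_derivative_linear by blast+
  then show ?thesis
    using assms by (simp add: jacobian_def frechet_derivative_compose matrix_compose)
qed

lemma linear_axis_expansion:
  fixes F :: "real^'n \<Rightarrow> real"
  assumes "linear F"
  shows "F v = (\<Sum>i\<in>UNIV. v $ i * F (axis i 1))"
proof -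
  have "F v = F (\<Sum>i\<in>UNIV. v $ i *\<^sub>R axis i 1)"
    using basis_expansion[of v] by (simp add: scalar_mult_eq_scaleR)
  also have "\<dots> = (\<Sum>i\<in>UNIV. v $ i * F (axis i 1))"
    using assms by (simp add: linear_sum linear_scale)
  finally show ?thesis .
qed

lemma grad_compose:
  fixes A :: "real^'m \<Rightarrow> real" and B :: "real^'n \<Rightarrow> real^'m"
  assumes "A differentiable (at (B z))" "B differentiable (at z)"
  shows "grad (A \<circ> B) z = grad A (B z) v* jacobian B (at z)"
proof -
  let ?DA = "frechet_derivative A (at (B z))" and ?J = "jacobian B (at z)"
  have "linear ?DA"
    using assms frechet_derivative_works has_derivative_linear by blast
  have DB: "frechet_derivative B (at z) = (\<lambda>v. ?J *v v)"
    using frechet_derivative_at[OF jacobian_works[THEN iffD1, OF assms(2)]] by simp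
  have D: "frechet_derivative (A \<circ> B) (at z) = (\<lambda>v. ?DA (?J *v v))"
    unfolding frechet_derivative_compose[OF assms(2,1)] DB by (simp add: o_def)
  have "grad (A \<circ> B) z $ i = (grad A (B z) v* ?J) $ i" for i
  proof -
    have "grad (A \<circ> B) z $ i = ?DA (?J *v axis i 1)"
      by (simp add: grad_def D)
    also have "\<dots> = (\<Sum>l\<in>UNIV. ?J $ l $ i * ?DA (axis l 1))"
      by (subst linear_axis_expansion[OF \<open>linear ?DA\<close>])
        (simp add: matrix_vector_mult_def axis_def if_distrib cong: if_cong)
    also have "\<dots> = (grad A (B z) v* ?J) $ i"
      by (simp add: grad_def vector_matrix_mult_def mult.commute)
    finally show ?thesis .
  qed
  then show ?thesis
    by (simp add: vec_eq_iff)
qed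

lemma flow_self [simp]: "flow f x k k = id"
  by (cases k) auto

lemma flow_trans:
  assumes "i \<le> k" "k \<le> \<tau>"
  shows "flow f x i \<tau> = flow f x k \<tau> \<circ> flow f x i k"
  using assms
proof (induction \<tau>)
  case (Suc \<tau>)
  then show ?case
    by (cases "k = Suc \<tau>") (auto simp: o_assoc)
qed simp

lemma flow_hid: "i \<le> k \<Longrightarrow> flow f x i k (hid f x h0 i) = hid f x h0 k"
  unfolding hid_def using flow_trans[of 0 i k f x] by simp

lemma vector_matrix_mult_sum_left:
  "(\<Sum>i\<in>I. v i) v* A = (\<Sum>i\<in>I. v i v* A)"
  by (induction I rule: infinite_finite_induct) (simp_all add: vector_matrix_left_distrib)

lemma tendsto_vector_matrix_mult [tendsto_intros]:
  fixes v :: "'a \<Rightarrow> real^'m" and A :: "'a \<Rightarrow> real^'n^'m"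
  assumes "(v \<longlongrightarrow> v0) F" "(A \<longlongrightarrow> A0) F"
  shows "((\<lambda>a. v a v* A a) \<longlongrightarrow> v0 v* A0) F"
  unfolding vector_matrix_mult_def by (intro tendsto_intros assms)

lemma tendsto_matrix_matrix_mult [tendsto_intros]:
  fixes A :: "'a \<Rightarrow> real^'n^'m" and B :: "'a \<Rightarrow> real^'k^'n"
  assumes "(A \<longlongrightarrow> A0) F" "(B \<longlongrightarrow> B0) F"
  shows "((\<lambda>a. A a ** B a) \<longlongrightarrow> A0 ** B0) F"
  unfolding matrix_matrix_mult_def by (intro tendsto_intros assms)

lemma sum_triangle_swap:
  fixes F :: "nat \<Rightarrow> nat \<Rightarrow> 'a::comm_monoid_add"
  shows "(\<Sum>k<t. \<Sum>i\<le>k. F i k) = (\<Sum>i<t. \<Sum>m<t - i. F i (i + m))"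
proof (induction t)
  case (Suc t)
  have "(\<Sum>k<Suc t. \<Sum>i\<le>k. F i k) = (\<Sum>i<t. \<Sum>m<t - i. F i (i + m)) + (\<Sum>i\<le>t. F i t)"
    using Suc by simp
  also have "\<dots> = (\<Sum>i<Suc t. (\<Sum>m<t - i. F i (i + m)) + F i t)"
    by (simp add: sum.distrib flip: lessThan_Suc_atMost)
  also have "\<dots> = (\<Sum>i<Suc t. \<Sum>m<Suc t - i. F i (i + m))"
    by (intro sum.cong) (auto simp: Suc_diff_le)
  finally show ?case .
qed simp

(* G n is an n-step return with rewards r and bootstrap values u; the lambda-return error is
   the discounted sum of the one-step TD errors. *)
lemma lambda_return_telescope:
  fixes r u :: "nat \<Rightarrow> 'a::real_vector" and \<gamma> lam :: real
  defines "G \<equiv> \<lambda>n. (\<Sum>\<tau>=1..n. \<gamma>^(\<tau>-1) *\<^sub>R r \<tau>) + \<gamma>^n *\<^sub>R u n"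
  shows "(1 - lam) *\<^sub>R (\<Sum>n=1..N. lam^(n-1) *\<^sub>R G n) + lam^N *\<^sub>R G (Suc N) - u 0
     = (\<Sum>m\<le>N. (\<gamma>*lam)^m *\<^sub>R (r (Suc m) + \<gamma> *\<^sub>R u (Suc m) - u m))"
proof (induction N)
  case (Suc N)
  have G_Suc: "G (Suc (Suc N)) = G (Suc N) + \<gamma>^(Suc N) *\<^sub>R (r (Suc (Suc N)) + \<gamma> *\<^sub>R u (Suc (Suc N)) - u (Suc N))"
    by (simp add: G_def algebra_simps)
  have "(1 - lam) *\<^sub>R (\<Sum>n=1..Suc N. lam^(n-1) *\<^sub>R G n) + lam^(Suc N) *\<^sub>R G (Suc (Suc N)) - u 0
      = ((1 - lam) *\<^sub>R (\<Sum>n=1..N. lam^(n-1) *\<^sub>R G n) + lam^N *\<^sub>R G (Suc N) - u 0)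
        + (\<gamma>*lam)^(Suc N) *\<^sub>R (r (Suc (Suc N)) + \<gamma> *\<^sub>R u (Suc (Suc N)) - u (Suc N))"
    unfolding G_Suc by (simp add: algebra_simps power_mult_distrib)
  then show ?case
    using Suc.IH by simp
qed (simp add: G_def)

lemma relative_error_tendsto_zero:
  fixes X Y :: "real \<Rightarrow> 'a::real_normed_vector"
  assumes "(X \<longlongrightarrow> S) (at_right 0)" "(Y \<longlongrightarrow> S) (at_right 0)" "S \<noteq> 0"
  shows "((\<lambda>\<alpha>. norm ((c + \<alpha> *\<^sub>R X \<alpha>) - (c + \<alpha> *\<^sub>R Y \<alpha>)) / norm ((c + \<alpha> *\<^sub>R X \<alpha>) - c))
           \<longlongrightarrow> 0) (at_right 0)"
proof -
  have "((\<lambda>\<alpha>. norm (X \<alpha> - Y \<alpha>) / norm (X \<alpha>)) \<longlongrightarrow> norm (S - S) / norm S) (at_right 0)"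
    using assms by (intro tendsto_intros) auto
  moreover have "\<forall>\<^sub>F \<alpha> in at_right 0. norm (X \<alpha> - Y \<alpha>) / norm (X \<alpha>) =
      norm ((c + \<alpha> *\<^sub>R X \<alpha>) - (c + \<alpha> *\<^sub>R Y \<alpha>)) / norm ((c + \<alpha> *\<^sub>R X \<alpha>) - c)"
    using eventually_at_right_less[of 0]
    by eventually_elim (simp flip: scaleR_diff_right)
  ultimately show ?thesis
    by (simp add: tendsto_cong)
qed

locale recurrent_network =
  fixes f :: "'x \<Rightarrow> real^'d \<Rightarrow> real^'d"
    and x :: "nat \<Rightarrow> 'x"
    and h0 :: "real^'d"
    and ell :: "nat \<Rightarrow> real^'d \<Rightarrow> real"
    and T :: nat
  assumes f_diff: "\<And>\<tau> z. \<tau> \<in> {1..T} \<Longrightarrow> f (x \<tau>) differentiable (at z)"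
    and ell_diff: "\<And>\<tau> z. \<tau> \<in> {1..T} \<Longrightarrow> ell \<tau> differentiable (at z)"
begin

lemma differentiable_flow: "\<tau> \<le> T \<Longrightarrow> flow f x s \<tau> differentiable (at z)"
proof (induction \<tau> arbitrary: z)
  case (Suc \<tau>)
  then have "f (x (Suc \<tau>)) \<circ> flow f x s \<tau> differentiable (at z)"
    using f_diff by (intro differentiable_chain_at) auto
  then show ?case by (simp add: id_def)
qed (simp add: id_def)

lemma dh_self [simp]: "dh f x h0 i i = mat 1"
  by (simp add: dh_def jacobian_def frechet_derivative_at[OF has_derivative_id] matrix_id_mat_1)

lemma dh_trans:
  assumes "i \<le> k" "k \<le> \<tau>" "\<tau> \<le> T"
  shows "dh f x h0 \<tau> i = dh f x h0 \<tau> k ** dh f x h0 k i"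
  using assms flow_trans[of i k \<tau> f x] flow_hid[of i k f x h0]
    jacobian_compose[of "flow f x k \<tau>" "flow f x i k" "hid f x h0 i"]
  by (simp add: dh_def differentiable_flow)

lemma dL_transport:
  assumes "i \<le> k" "k \<le> \<tau>" "\<tau> \<in> {1..T}"
  shows "dL f x h0 ell \<tau> i = dL f x h0 ell \<tau> k v* dh f x h0 k i"
proof -
  have "ell \<tau> \<circ> flow f x i \<tau> = (ell \<tau> \<circ> flow f x k \<tau>) \<circ> flow f x i k"
    using assms flow_trans[of i k \<tau> f x] by (simp add: o_assoc)
  moreover have "ell \<tau> \<circ> flow f x k \<tau> differentiable (at z)" for z
    using assms ell_diff differentiable_flow by (intro differentiable_chain_at) auto
  ultimately show ?thesis
    using assms flow_hid[of i k f x h0] differentiable_flow[of k]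
      grad_compose[of "ell \<tau> \<circ> flow f x k \<tau>" "flow f x i k" "hid f x h0 i"]
    by (simp add: dL_def dh_def)
qed

end

locale synthetic_gradient = recurrent_network f x h0 ell T
  for f :: "'x \<Rightarrow> real^'d \<Rightarrow> real^'d" and x h0 ell T +
  fixes g :: "real^'d \<Rightarrow> real^'p \<Rightarrow> real^'d"
    and \<gamma> lam :: real
    and \<theta>0 :: "real^'p"
  assumes g_diff: "\<And>h \<theta>. g h differentiable (at \<theta>)"
    and g_C1: "\<And>h. continuous_on UNIV (\<lambda>\<theta>. dg g h \<theta>)"
begin

lemma tendsto_g [tendsto_intros]: "(\<theta> \<longlongrightarrow> \<theta>1) F \<Longrightarrow> ((\<lambda>a. g h (\<theta> a)) \<longlongrightarrow> g h \<theta>1) F"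
  using g_diff differentiable_imp_continuous_within isCont_tendsto_compose by blast

lemma tendsto_dg [tendsto_intros]:
  assumes "(\<theta> \<longlongrightarrow> \<theta>1) F"
  shows "((\<lambda>a. dg g h (\<theta> a)) \<longlongrightarrow> dg g h \<theta>1) F"
proof (rule isCont_tendsto_compose[OF _ assms])
  show "isCont (dg g h) \<theta>1"
    using g_C1[of h] by (simp add: continuous_on_eq_continuous_at)
qed

definition td_error :: "real^'p \<Rightarrow> nat \<Rightarrow> real^'d" where
  "td_error \<theta> k = dL f x h0 ell (k + 1) k + \<gamma> *\<^sub>R (g (hid f x h0 (k + 1)) \<theta> v* dh f x h0 (k + 1) k)
     - g (hid f x h0 k) \<theta>"

abbreviation bp_weight :: "real \<Rightarrow> nat \<Rightarrow> real^'p" where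
  "bp_weight \<alpha> k \<equiv> snd (bpstate f x h0 ell g \<gamma> lam \<alpha> \<theta>0 k)"

(* bpstate (Suc k) stores the trace e_k. *)
abbreviation bp_trace :: "real \<Rightarrow> nat \<Rightarrow> real^'p^'d" where
  "bp_trace \<alpha> k \<equiv> fst (bpstate f x h0 ell g \<gamma> lam \<alpha> \<theta>0 (Suc k))"

definition bp_direction :: "real \<Rightarrow> nat \<Rightarrow> real^'p" where
  "bp_direction \<alpha> t = (\<Sum>k<t. td_error (bp_weight \<alpha> k) k v* bp_trace \<alpha> k)"

lemma bp_weight_Suc:
  "bp_weight \<alpha> (Suc k) = bp_weight \<alpha> k + \<alpha> *\<^sub>R (td_error (bp_weight \<alpha> k) k v* bp_trace \<alpha> k)"
  by (simp add: td_error_def Let_def)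

lemma bp_trace_Suc:
  "bp_trace \<alpha> (Suc k) =
     (\<gamma> * lam) *\<^sub>R (dh f x h0 (Suc k) k ** bp_trace \<alpha> k) + dg g (hid f x h0 (Suc k)) (bp_weight \<alpha> (Suc k))"
  by (simp add: Let_def)

lemma bp_weight_zero_rate [simp]: "bp_weight 0 k = \<theta>0"
  by (induction k) (simp_all add: Let_def)

lemma thetaBP_eq_bp_direction:
  "thetaBP f x h0 ell g \<gamma> lam \<alpha> \<theta>0 t = \<theta>0 + \<alpha> *\<^sub>R bp_direction \<alpha> t"
proof (induction t)
  case (Suc t)
  then show ?case
    by (simp only: thetaBP_def bp_direction_def bp_weight_Suc sum.lessThan_Suc
        scaleR_right_distrib add.assoc)
qed (simp add: thetaBP_def bp_direction_def)

lemma bpstate_tendsto: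
  assumes \<alpha>: "((\<lambda>\<alpha>. \<alpha>) \<longlongrightarrow> \<alpha>0) F"
  shows "((\<lambda>\<alpha>. bpstate f x h0 ell g \<gamma> lam \<alpha> \<theta>0 k) \<longlongrightarrow> bpstate f x h0 ell g \<gamma> lam \<alpha>0 \<theta>0 k) F"
proof (induction k)
  case (Suc k)
  show ?case
    by (cases "k = 0") (simp_all only: bpstate.simps Let_def transpose_matrix_vector if_True if_False;
        intro tendsto_intros \<alpha> Suc.IH)+
qed simp

lemma bp_direction_tendsto:
  assumes "((\<lambda>\<alpha>. \<alpha>) \<longlongrightarrow> 0) F"
  shows "((\<lambda>\<alpha>. bp_direction \<alpha> t) \<longlongrightarrow> bp_direction 0 t) F"
  unfolding bp_direction_def td_error_def
  by (intro tendsto_intros tendsto_fst tendsto_snd bpstate_tendsto assms)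

lemma bp_trace_expansion:
  assumes "k < T"
  shows "v v* bp_trace \<alpha> k =
    (\<Sum>i\<le>k. (\<gamma> * lam)^(k - i) *\<^sub>R ((v v* dh f x h0 k i) v* dg g (hid f x h0 i) (bp_weight \<alpha> i)))"
  using assms
proof (induction k arbitrary: v)
  case (Suc k)
  let ?c = "\<gamma> * lam" and ?G = "\<lambda>i. dg g (hid f x h0 i) (bp_weight \<alpha> i)"
  have chain: "(v v* dh f x h0 (Suc k) k) v* dh f x h0 k i = v v* dh f x h0 (Suc k) i" if "i \<le> k" for i
    using that Suc.prems dh_trans[of i k "Suc k"] by (simp add: vector_matrix_mul_assoc)
  have "v v* bp_trace \<alpha> (Suc k) = ?c *\<^sub>R ((v v* dh f x h0 (Suc k) k) v* bp_trace \<alpha> k) + v v* ?G (Suc k)"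
    by (simp only: bp_trace_Suc vector_matrix_mult_add_rdistrib vector_scaleR_matrix_ac vector_matrix_mul_assoc)
  also have "\<dots> = (\<Sum>i\<le>k. ?c^(Suc k - i) *\<^sub>R ((v v* dh f x h0 (Suc k) i) v* ?G i)) + v v* ?G (Suc k)"
    using Suc by (simp add: scaleR_sum_right chain Suc_diff_le)
  also have "\<dots> = (\<Sum>i\<le>Suc k. ?c^(Suc k - i) *\<^sub>R ((v v* dh f x h0 (Suc k) i) v* ?G i))"
    by simp
  finally show ?case .
qed (simp add: Let_def)

lemma td_error_transport:
  assumes "i \<le> k" "k < T"
  shows "td_error \<theta> k v* dh f x h0 k i =
    dL f x h0 ell (Suc k) i + \<gamma> *\<^sub>R (g (hid f x h0 (Suc k)) \<theta> v* dh f x h0 (Suc k) i)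
      - g (hid f x h0 k) \<theta> v* dh f x h0 k i"
proof -
  have "dL f x h0 ell (Suc k) i = dL f x h0 ell (Suc k) k v* dh f x h0 k i"
    using assms by (intro dL_transport) auto
  moreover have "dh f x h0 (Suc k) i = dh f x h0 (Suc k) k ** dh f x h0 k i"
    using assms by (intro dh_trans) auto
  ultimately show ?thesis
    by (simp add: td_error_def vector_matrix_mult_diff_distrib vector_matrix_left_distrib
        scaleR_vector_matrix_assoc vector_matrix_mul_assoc)
qed

lemma lambda_return_eq_td_sum:
  assumes "i < t" "t \<le> T"
  shows "Glam f x h0 ell g \<gamma> lam (\<lambda>j. \<theta>) i t - g (hid f x h0 i) \<theta> =
    (\<Sum>m<t - i. (\<gamma> * lam)^m *\<^sub>R (td_error \<theta> (i + m) v* dh f x h0 (i + m) i))"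
proof -
  define r where "r \<tau> = dL f x h0 ell (i + \<tau>) i" for \<tau>
  define u where "u n = g (hid f x h0 (i + n)) \<theta> v* dh f x h0 (i + n) i" for n
  obtain N where N: "t - i = Suc N"
    using assms by (metis Suc_diff_Suc)
  have "Gn f x h0 ell g \<gamma> (\<lambda>j. \<theta>) i n = (\<Sum>\<tau>=1..n. \<gamma>^(\<tau>-1) *\<^sub>R r \<tau>) + \<gamma>^n *\<^sub>R u n" for n
    by (simp add: Gn_def r_def u_def)
  then have "Glam f x h0 ell g \<gamma> lam (\<lambda>j. \<theta>) i t - g (hid f x h0 i) \<theta> =
      (\<Sum>m\<le>N. (\<gamma> * lam)^m *\<^sub>R (r (Suc m) + \<gamma> *\<^sub>R u (Suc m) - u m))"
    using lambda_return_telescope[where r=r and u=u and \<gamma>=\<gamma> and lam=lam and N=N] N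
    by (simp add: Glam_def u_def)
  also have "\<dots> = (\<Sum>m<t - i. (\<gamma> * lam)^m *\<^sub>R (td_error \<theta> (i + m) v* dh f x h0 (i + m) i))"
    unfolding N lessThan_Suc_atMost using assms N
    by (intro sum.cong refl) (simp add: r_def u_def td_error_transport)
  finally show ?thesis .
qed

lemma bp_direction_zero_rate:
  assumes "t \<le> T"
  shows "bp_direction 0 t = (\<Sum>i<t. Delta f x h0 ell g \<gamma> lam \<theta>0 i t)"
proof -
  let ?c = "\<gamma> * lam" and ?G = "\<lambda>i. dg g (hid f x h0 i) \<theta>0"
  have "bp_direction 0 t = (\<Sum>k<t. \<Sum>i\<le>k. ?c^(k - i) *\<^sub>R ((td_error \<theta>0 k v* dh f x h0 k i) v* ?G i))"
    unfolding bp_direction_def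
    by (intro sum.cong refl, subst bp_trace_expansion) (use assms in auto)
  also have "\<dots> = (\<Sum>i<t. \<Sum>m<t - i. ?c^m *\<^sub>R ((td_error \<theta>0 (i + m) v* dh f x h0 (i + m) i) v* ?G i))"
    by (simp add: sum_triangle_swap)
  also have "\<dots> = (\<Sum>i<t. (\<Sum>m<t - i. ?c^m *\<^sub>R (td_error \<theta>0 (i + m) v* dh f x h0 (i + m) i)) v* ?G i)"
    by (simp add: vector_matrix_mult_sum_left scaleR_vector_matrix_assoc)
  also have "\<dots> = (\<Sum>i<t. Delta f x h0 ell g \<gamma> lam \<theta>0 i t)"
    using assms by (intro sum.cong refl) (simp add: Delta_def lambda_return_eq_td_sum)
  finally show ?thesis .
qed

definition sg_update :: "real \<Rightarrow> nat \<Rightarrow> (nat \<Rightarrow> real^'p) \<Rightarrow> nat \<Rightarrow> real^'p" where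
  "sg_update \<alpha> s V j =
     (let \<theta> = sginner f x h0 ell g \<gamma> lam \<alpha> \<theta>0 s V j
      in (Glam f x h0 ell g \<gamma> lam V j s - g (hid f x h0 j) \<theta>) v* dg g (hid f x h0 j) \<theta>)"

lemma sginner_eq_sum:
  "sginner f x h0 ell g \<gamma> lam \<alpha> \<theta>0 s V k = \<theta>0 + \<alpha> *\<^sub>R (\<Sum>j<k. sg_update \<alpha> s V j)"
proof (induction k)
  case (Suc k)
  have "sginner f x h0 ell g \<gamma> lam \<alpha> \<theta>0 s V (Suc k) =
      sginner f x h0 ell g \<gamma> lam \<alpha> \<theta>0 s V k + \<alpha> *\<^sub>R sg_update \<alpha> s V k"
    by (simp add: sg_update_def Let_def)
  then show ?case
    using Suc by (simp add: scaleR_right_distrib)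
qed simp

lemma Glam_tendsto:
  assumes "\<And>j. ((\<lambda>\<alpha>. V \<alpha> j) \<longlongrightarrow> \<theta>) F"
  shows "((\<lambda>\<alpha>. Glam f x h0 ell g \<gamma> lam (V \<alpha>) k s) \<longlongrightarrow> Glam f x h0 ell g \<gamma> lam (\<lambda>j. \<theta>) k s) F"
  unfolding Glam_def Gn_def transpose_matrix_vector by (intro tendsto_intros assms)

lemma sginner_sg_update_tendsto:
  assumes \<alpha>: "((\<lambda>\<alpha>. \<alpha>) \<longlongrightarrow> 0) F"
    and V: "\<And>j. ((\<lambda>\<alpha>. V \<alpha> j) \<longlongrightarrow> \<theta>0) F"
  shows "((\<lambda>\<alpha>. sginner f x h0 ell g \<gamma> lam \<alpha> \<theta>0 s (V \<alpha>) k) \<longlongrightarrow> \<theta>0) F \<and>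
    ((\<lambda>\<alpha>. sg_update \<alpha> s (V \<alpha>) k) \<longlongrightarrow> Delta f x h0 ell g \<gamma> lam \<theta>0 k s) F"
proof (induction k rule: less_induct)
  case (less k)
  have "((\<lambda>\<alpha>. \<theta>0 + \<alpha> *\<^sub>R (\<Sum>j<k. sg_update \<alpha> s (V \<alpha>) j))
      \<longlongrightarrow> \<theta>0 + 0 *\<^sub>R (\<Sum>j<k. Delta f x h0 ell g \<gamma> lam \<theta>0 j s)) F"
    using less by (intro tendsto_intros \<alpha>) auto
  then have \<theta>: "((\<lambda>\<alpha>. sginner f x h0 ell g \<gamma> lam \<alpha> \<theta>0 s (V \<alpha>) k) \<longlongrightarrow> \<theta>0) F"
    by (simp add: sginner_eq_sum)
  then have "((\<lambda>\<alpha>. sg_update \<alpha> s (V \<alpha>) k) \<longlongrightarrow> Delta f x h0 ell g \<gamma> lam \<theta>0 k s) F"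
    unfolding sg_update_def Delta_def Let_def transpose_matrix_vector
    by (intro tendsto_intros Glam_tendsto V)
  with \<theta> show ?case ..
qed

lemma sgseq_tendsto:
  assumes "((\<lambda>\<alpha>. \<alpha>) \<longlongrightarrow> 0) F"
  shows "((\<lambda>\<alpha>. sgseq f x h0 ell g \<gamma> lam \<alpha> \<theta>0 n i) \<longlongrightarrow> \<theta>0) F"
proof (induction n arbitrary: i)
  case (Suc n)
  have "sgseq f x h0 ell g \<gamma> lam \<alpha> \<theta>0 (Suc n) i =
      (if i = Suc n then sginner f x h0 ell g \<gamma> lam \<alpha> \<theta>0 (Suc n) (sgseq f x h0 ell g \<gamma> lam \<alpha> \<theta>0 n) (Suc n)
       else sgseq f x h0 ell g \<gamma> lam \<alpha> \<theta>0 n i)" for \<alpha>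
    by (simp only: sgseq.simps(2) Let_def fun_upd_apply)
  then show ?case
    using Suc.IH sginner_sg_update_tendsto[OF assms Suc.IH]
    by (cases "i = Suc n") (simp_all only: if_True if_False simp_thms)
qed simp

end

theorem theorem1:
  fixes f :: "'x \<Rightarrow> real^'d \<Rightarrow> real^'d"
    and x :: "nat \<Rightarrow> 'x"
    and h0 :: "real^'d"
    and ell :: "nat \<Rightarrow> real^'d \<Rightarrow> real"
    and g :: "real^'d \<Rightarrow> real^'p \<Rightarrow> real^'d"
    and \<gamma> lam :: real
    and \<theta>0 :: "real^'p"
    and T t :: nat
  assumes f_diff: "\<And>\<tau> z. \<tau> \<in> {1..T} \<Longrightarrow> f (x \<tau>) differentiable (at z)"
    and ell_diff: "\<And>\<tau> z. \<tau> \<in> {1..T} \<Longrightarrow> ell \<tau> differentiable (at z)"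
    and g_diff: "\<And>h \<theta>. g h differentiable (at \<theta>)"
    and g_C1: "\<And>h. continuous_on UNIV (\<lambda>\<theta>. dg g h \<theta>)"
    and \<gamma>: "0 \<le> \<gamma>" "\<gamma> \<le> 1"
    and lam: "0 \<le> lam" "lam \<le> 1"
    and t: "1 \<le> t" "t \<le> T"
    and nz: "\<And>j. (\<Sum>i<t. Delta f x h0 ell g \<gamma> lam \<theta>0 i t) $ j \<noteq> 0"
  shows "((\<lambda>\<alpha>. norm (thetaBP f x h0 ell g \<gamma> lam \<alpha> \<theta>0 t - thetaLam f x h0 ell g \<gamma> lam \<alpha> \<theta>0 t)
                / norm (thetaBP f x h0 ell g \<gamma> lam \<alpha> \<theta>0 t - \<theta>0))
          \<longlongrightarrow> 0) (at_right 0)"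
proof -
  interpret synthetic_gradient f x h0 ell T g \<gamma> lam \<theta>0
    using f_diff ell_diff g_diff g_C1 by unfold_locales
  obtain m where m: "t = Suc m"
    using t(1) by (cases t) auto
  let ?S = "\<Sum>i<t. Delta f x h0 ell g \<gamma> lam \<theta>0 i t"
  let ?V = "\<lambda>\<alpha>. sgseq f x h0 ell g \<gamma> lam \<alpha> \<theta>0 m"
  have \<alpha>: "((\<lambda>\<alpha>::real. \<alpha>) \<longlongrightarrow> 0) (at_right 0)"
    by (rule tendsto_ident_at)
  have "?S \<noteq> 0"
    using nz by (metis zero_index)
  have BP: "((\<lambda>\<alpha>. bp_direction \<alpha> t) \<longlongrightarrow> ?S) (at_right 0)"
    using bp_direction_tendsto[OF \<alpha>, of t] by (simp only: bp_direction_zero_rate[OF t(2)])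
  have SG: "((\<lambda>\<alpha>. \<Sum>j<t. sg_update \<alpha> t (?V \<alpha>) j) \<longlongrightarrow> ?S) (at_right 0)"
    using sginner_sg_update_tendsto[where V="?V", OF \<alpha> sgseq_tendsto[OF \<alpha>]]
    by (intro tendsto_sum) blast
  have "thetaLam f x h0 ell g \<gamma> lam \<alpha> \<theta>0 t = sginner f x h0 ell g \<gamma> lam \<alpha> \<theta>0 t (?V \<alpha>) t" for \<alpha>
    unfolding thetaLam_def m by (simp only: sgseq.simps(2) Let_def fun_upd_same)
  then show ?thesis
    using relative_error_tendsto_zero[OF BP SG \<open>?S \<noteq> 0\<close>, of \<theta>0]
    by (simp only: thetaBP_eq_bp_direction sginner_eq_sum)
qed

end
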